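(* Assume $k_{+\infty}=k_{-\infty}=:k_\infty$ and $k^2(x)\le k_\infty^2$ for all $x$. Let $\chi=\sqrt{k_\infty^2-k^2}$, and suppose $\chi$ is continuous and piecewise continuously differentiable and there is $x_0$ such that $\chi$ is nondecreasing on $(-\infty,x_0]$ and nonincreasing on $[x_0,\infty)$ (a single-hump barrier). Then $$T\ \ge\ \mathrm{sech}^2\left\{\frac{\max_x\sqrt{k_\infty^2-k^2(x)}}{k_\infty}+\int_{-\infty}^{\infty}\sqrt{k_\infty^2-k^2}\;\mathrm{d}x\right\}.$$ In quantum-mechanical notation, with $k^2=2m(E-V)/\hbar^2$, $V\ge0$, $V\to0$ at $\pm\infty$, $E>0$ and $V$ single-humped with maximum $V_{\max}$, this reads $T\ge\mathrm{sech}^2\{\sqrt{V_{\max}/E}+\int_{-\infty}^{\infty}\sqrt{2mV}/\hbar\,\mathrm{d}x\}$.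
   Context: Standing setup: $k^2:\mathbb{R}\to\mathbb{R}$ is a piecewise continuous function with $k^2(x)\to k_{\pm\infty}^2$ as $x\to\pm\infty$, where $k_{\pm\infty}>0$ and $k^2-k_{\pm\infty}^2$ is integrable near $\pm\infty$. For the equation $u''+k^2(x)u=0$ there is a solution with $u(x)=e^{ik_{-\infty}x}+r\,e^{-ik_{-\infty}x}+o(1)$ as $x\to-\infty$ and $u(x)=\tau\,e^{ik_{+\infty}x}+o(1)$ as $x\to+\infty$; the transmission probability is $T=(k_{+\infty}/k_{-\infty})|\tau|^2$. Here $\mathrm{sech}=1/\cosh$, and if the integral equals $+\infty$ the bound is read as the trivial statement $T\ge 0$. *)

theory Defs
  imports "HOL-Analysis.Analysis"
begin

definition sech :: "real \<Rightarrow> real" where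
  "sech x = 1 / cosh x"

definition piecewise_continuous :: "(real \<Rightarrow> real) \<Rightarrow> bool" where
  "piecewise_continuous f \<longleftrightarrow>
     (\<forall>a b. finite {x \<in> {a..b}. \<not> isCont f x}) \<and>
     (\<forall>x. (\<exists>l. (f \<longlongrightarrow> l) (at_left x)) \<and> (\<exists>l. (f \<longlongrightarrow> l) (at_right x)))"

definition is_solution :: "(real \<Rightarrow> real) \<Rightarrow> (real \<Rightarrow> complex) \<Rightarrow> bool" where
  "is_solution q u \<longleftrightarrow>
     (\<exists>u'. (\<forall>x. (u has_vector_derivative u' x) (at x)) \<and> continuous_on UNIV u' \<and>
           (\<forall>x. isCont q x \<longrightarrow>
                 (u' has_vector_derivative (- (complex_of_real (q x) * u x))) (at x)))"

end

theory Submission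
  imports Defs
begin

(* Write chi = sqrt (k^2 - q) >= 0 and h = k + chi, so the solution u of u'' + q u = 0
   satisfies u'' = -(k^2 - chi^2) u.  Two quantities control the argument:
   the Wronskian W = Im (conj u * u'), which is constant, and the energy
   F = h |u|^2 + |u'|^2 / h, which always satisfies F >= 2|W|.  A pointwise algebraic
   inequality gives |F'| <= (|chi'|/h + 2 chi) sqrt (F^2 - 4 W^2), so the regularised
   logarithmic energy Phi = ln (F + sqrt (F^2 - 4 W^2 + e)) has Phi' >= -(|chi'|/h + 2 chi).
   Consequently Phi + ln h + 2 int chi increases where chi increases and
   Phi - ln h + 2 int chi increases where chi decreases; chaining both across the top x0
   of the hump bounds Phi at -infinity by Phi at +infinity plus 2 ln h(x0) + 2 int chi.
   At both ends u approaches a free wave a e^{ikx} + b e^{-ikx}, whose energy is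
   2k(|a|^2+|b|^2) and whose Wronskian is k(|a|^2-|b|^2); this identifies W = kT = k(1-R)
   and the limits of F.  Letting e -> 0 gives (1 + sqrt R)^2 <= T exp (2 (chi(x0)/k + int chi)),
   which together with R = 1 - T is equivalent to the sech^2 bound.

   Since chi is continuous, so is q = k^2 - chi^2. *)

section \<open>Energy and Wronskian of a complex solution\<close>

definition energy :: "real \<Rightarrow> (real \<Rightarrow> complex) \<Rightarrow> (real \<Rightarrow> complex) \<Rightarrow> real \<Rightarrow> real" where
  "energy h u u' x = h * (cmod (u x))\<^sup>2 + (cmod (u' x))\<^sup>2 / h"

text \<open>The Wronskian of u and its complex conjugate (up to a factor 2i).\<close>
definition wronskian :: "(real \<Rightarrow> complex) \<Rightarrow> (real \<Rightarrow> complex) \<Rightarrow> real \<Rightarrow> real" where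
  "wronskian u u' x = Im (cnj (u x) * u' x)"

text \<open>Regularised logarithmic energy: differentiable even where F = 2|W|.\<close>
definition log_energy :: "real \<Rightarrow> real \<Rightarrow> real \<Rightarrow> real" where
  "log_energy W e F = ln (F + sqrt (F\<^sup>2 - 4 * W\<^sup>2 + e))"

lemma solution_derivatives:
  fixes q chi :: "real \<Rightarrow> real" and u :: "real \<Rightarrow> complex" and k :: real
  assumes sol: "is_solution q u" and q: "\<And>x. q x = k\<^sup>2 - (chi x)\<^sup>2"
    and chic: "continuous_on UNIV chi"
  obtains u' where "\<And>x. (u has_vector_derivative u' x) (at x)"
    and "\<And>x. (u' has_vector_derivative - (of_real (k\<^sup>2 - (chi x)\<^sup>2) * u x)) (at x)"
proof -
  have "isCont q x" for x
    unfolding q[abs_def] using chic by (intro continuous_intros) (simp add: continuous_on_eq_continuous_at)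
  then show ?thesis using sol that unfolding is_solution_def q by blast
qed

lemma wronskian_constant:
  fixes u u' :: "real \<Rightarrow> complex" and p :: "real \<Rightarrow> real"
  assumes du: "\<And>x. (u has_vector_derivative u' x) (at x)"
    and du': "\<And>x. (u' has_vector_derivative - (of_real (p x) * u x)) (at x)"
  obtains W where "\<And>x. wronskian u u' x = W"
proof -
  have "(wronskian u u' has_real_derivative 0) (at x)" for x
  proof -
    have "wronskian u u' = (\<lambda>t. Re (u t) * Im (u' t) - Im (u t) * Re (u' t))"
      by (auto simp: wronskian_def fun_eq_iff)
    then show ?thesis
      by (auto intro!: derivative_eq_intros du du' simp: algebra_simps)
  qed
  then show ?thesis
    using that has_field_derivative_zero_constant[of UNIV "wronskian u u'"] by auto
qed

text \<open>The energy dominates the Wronskian: F^2 - 4 W^2 is a sum of two squares.\<close>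
lemma wronskian_sq_le_energy_sq:
  fixes z z' :: complex and h :: real
  assumes h: "h > 0"
  shows "4 * (Im (cnj z * z'))\<^sup>2 \<le> (h * (cmod z)\<^sup>2 + (cmod z')\<^sup>2 / h)\<^sup>2"
proof -
  have "(h * (cmod z)\<^sup>2 + (cmod z')\<^sup>2 / h)\<^sup>2 - 4 * (Im (cnj z * z'))\<^sup>2
      = (h * (cmod z)\<^sup>2 - (cmod z')\<^sup>2 / h)\<^sup>2 + (2 * Re (cnj z * z'))\<^sup>2"
    unfolding cmod_power2 using h by (simp add: field_simps power2_eq_square)
  moreover have "0 \<le> (h * (cmod z)\<^sup>2 - (cmod z')\<^sup>2 / h)\<^sup>2 + (2 * Re (cnj z * z'))\<^sup>2"
    by simp
  ultimately show ?thesis by linarith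
qed

lemma wronskian_le_energy:
  assumes h: "h > 0"
  shows "2 * \<bar>wronskian u u' x\<bar> \<le> energy h u u' x"
proof -
  have "4 * (wronskian u u' x)\<^sup>2 \<le> (energy h u u' x)\<^sup>2"
    using wronskian_sq_le_energy_sq[OF h, of "u x" "u' x"] by (simp only: energy_def wronskian_def)
  then have "(2 * wronskian u u' x)\<^sup>2 \<le> (energy h u u' x)\<^sup>2"
    by (simp add: power_mult_distrib)
  moreover have "energy h u u' x \<ge> 0" using h by (simp add: energy_def)
  ultimately have "\<bar>2 * wronskian u u' x\<bar> \<le> energy h u u' x"
    by (simp only: power2_le_iff_abs_le)
  then show ?thesis by (simp add: abs_mult)
qed

lemma log_energy_arg_pos:
  fixes F W e :: real
  assumes F: "2 * \<bar>W\<bar> \<le> F" and e: "e > 0"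
  shows "0 < F\<^sup>2 - 4 * W\<^sup>2 + e" and "0 < F + sqrt (F\<^sup>2 - 4 * W\<^sup>2 + e)"
proof -
  have "(2 * \<bar>W\<bar>)\<^sup>2 \<le> F\<^sup>2" using F by (intro power_mono) auto
  then show rad: "0 < F\<^sup>2 - 4 * W\<^sup>2 + e" using e by (simp add: power_mult_distrib)
  have "0 \<le> F" using F by linarith
  with rad show "0 < F + sqrt (F\<^sup>2 - 4 * W\<^sup>2 + e)" by (intro add_nonneg_pos) auto
qed

lemma log_energy_continuous:
  fixes u u' :: "real \<Rightarrow> complex" and chi :: "real \<Rightarrow> real" and k e W :: real
  assumes k: "k > 0" and e: "e > 0"
    and du: "\<And>x. (u has_vector_derivative u' x) (at x)"
    and du': "\<And>x. (u' has_vector_derivative - (of_real (k\<^sup>2 - (chi x)\<^sup>2) * u x)) (at x)"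
    and W: "\<And>x. wronskian u u' x = W"
    and chic: "continuous_on UNIV chi" and chipos: "\<And>x. chi x \<ge> 0"
  shows "continuous_on UNIV (\<lambda>x. log_energy W e (energy (k + chi x) u u' x))"
proof -
  have hpos: "k + chi x > 0" for x using k chipos[of x] by linarith
  note pos = log_energy_arg_pos[OF wronskian_le_energy[OF hpos, of u u', unfolded W] e]
  have cont_u: "continuous_on UNIV u" "continuous_on UNIV u'"
    using du du' by (meson continuous_at_imp_continuous_on has_vector_derivative_continuous)+
  show ?thesis
    unfolding log_energy_def energy_def using pos hpos
    by (intro continuous_intros cont_u chic) (auto simp: energy_def less_imp_neq[symmetric])
qed

section \<open>Monotonicity of the logarithmic energy\<close>

text \<open>Pointwise algebra behind the derivative bound: writing u = X + iY, the derivative of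
  F is the left-hand expression and F^2 - 4 W^2 is the radicand on the right.\<close>
lemma energy_derivative_bound_alg:
  fixes h c dc X Y X' Y' :: real
  assumes h: "h > 0" and c: "c \<ge> 0"
  shows "\<bar>dc * ((X\<^sup>2+Y\<^sup>2) - (X'\<^sup>2+Y'\<^sup>2)/h\<^sup>2) + 4*c*(X*X'+Y*Y')\<bar>
     \<le> (\<bar>dc\<bar>/h + 2*c) * sqrt ((h*(X\<^sup>2+Y\<^sup>2) + (X'\<^sup>2+Y'\<^sup>2)/h)\<^sup>2 - 4*(X*Y'-Y*X')\<^sup>2)"
proof -
  define A where "A = h*(X\<^sup>2+Y\<^sup>2) - (X'\<^sup>2+Y'\<^sup>2)/h"
  define B where "B = 2*(X*X'+Y*Y')"
  have radicand: "(h*(X\<^sup>2+Y\<^sup>2) + (X'\<^sup>2+Y'\<^sup>2)/h)\<^sup>2 - 4*(X*Y'-Y*X')\<^sup>2 = A\<^sup>2 + B\<^sup>2"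
    unfolding A_def B_def using h by (simp add: field_simps power2_eq_square)
  have deriv: "dc * ((X\<^sup>2+Y\<^sup>2) - (X'\<^sup>2+Y'\<^sup>2)/h\<^sup>2) + 4*c*(X*X'+Y*Y') = (dc/h)*A + 2*c*B"
    unfolding A_def B_def using h by (simp add: field_simps power2_eq_square)
  have sA: "\<bar>A\<bar> \<le> sqrt (A\<^sup>2+B\<^sup>2)" and sB: "\<bar>B\<bar> \<le> sqrt (A\<^sup>2+B\<^sup>2)"
    by (metis real_sqrt_abs real_sqrt_le_mono le_add_same_cancel1 le_add_same_cancel2 zero_le_power2)+
  have "\<bar>(dc/h)*A + 2*c*B\<bar> \<le> \<bar>dc/h\<bar>*\<bar>A\<bar> + 2*c*\<bar>B\<bar>"
    using c abs_triangle_ineq[of "(dc/h)*A" "2*c*B"] by (simp add: abs_mult)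
  also have "\<dots> \<le> \<bar>dc/h\<bar>* sqrt (A\<^sup>2+B\<^sup>2) + 2*c* sqrt (A\<^sup>2+B\<^sup>2)"
    using sA sB c by (intro add_mono mult_left_mono) auto
  finally show ?thesis unfolding deriv radicand using h by (simp add: abs_divide algebra_simps)
qed

lemma energy_derivative:
  fixes u u' :: "real \<Rightarrow> complex" and chi :: "real \<Rightarrow> real" and k dc x :: real
  assumes k: "k > 0" and chipos: "chi x \<ge> 0"
    and du: "(u has_vector_derivative u' x) (at x)"
    and du': "(u' has_vector_derivative - (of_real (k\<^sup>2 - (chi x)\<^sup>2) * u x)) (at x)"
    and dchi: "(chi has_real_derivative dc) (at x)"
  obtains Fd where "((\<lambda>t. energy (k + chi t) u u' t) has_real_derivative Fd) (at x)"
    and "\<bar>Fd\<bar> \<le> (\<bar>dc\<bar> / (k + chi x) + 2 * chi x)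
        * sqrt ((energy (k + chi x) u u' x)\<^sup>2 - 4 * (wronskian u u' x)\<^sup>2)"
proof -
  define h where "h = k + chi x"
  define X Y X1 Y1 where "X = Re (u x)" and "Y = Im (u x)" and "X1 = Re (u' x)" and "Y1 = Im (u' x)"
  have hpos: "h > 0" using k chipos by (simp add: h_def)
  have energy_re_im: "energy (k + chi t) u u' t = (k + chi t) * ((Re (u t))\<^sup>2 + (Im (u t))\<^sup>2)
      + ((Re (u' t))\<^sup>2 + (Im (u' t))\<^sup>2) / (k + chi t)" for t
    by (simp add: energy_def cmod_power2)
  define Fd where "Fd = dc * ((X\<^sup>2+Y\<^sup>2) - (X1\<^sup>2+Y1\<^sup>2)/h\<^sup>2) + 4 * chi x * (X*X1+Y*Y1)"
  have "((\<lambda>t. energy (k + chi t) u u' t) has_real_derivative Fd) (at x)"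
  proof -
    \<comment> \<open>field_simps needs the expanded square of h to be nonzero\<close>
    have "k * k + (chi x * chi x + k * (chi x * 2)) = (k + chi x) * (k + chi x)"
      by (simp add: algebra_simps)
    then have "k * k + (chi x * chi x + k * (chi x * 2)) \<noteq> 0" using hpos by (simp add: h_def)
    then show ?thesis
      unfolding energy_re_im using hpos
      by (auto intro!: derivative_eq_intros du du' dchi simp: Fd_def h_def X_def Y_def X1_def Y1_def)
         (simp add: field_simps power2_eq_square)
  qed
  moreover have "energy h u u' x = h * (X\<^sup>2 + Y\<^sup>2) + (X1\<^sup>2 + Y1\<^sup>2) / h"
    and "wronskian u u' x = X * Y1 - Y * X1"
    by (simp_all add: energy_def cmod_power2 wronskian_def X_def Y_def X1_def Y1_def)
  then have "\<bar>Fd\<bar> \<le> (\<bar>dc\<bar> / h + 2 * chi x) * sqrt ((energy h u u' x)\<^sup>2 - 4 * (wronskian u u' x)\<^sup>2)"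
    using energy_derivative_bound_alg[OF hpos chipos, of dc X Y X1 Y1] unfolding Fd_def by simp
  ultimately show ?thesis using that unfolding h_def by blast
qed

text \<open>Since d/dF ln (F + sqrt (F^2 - 4W^2 + e)) = 1 / sqrt (F^2 - 4W^2 + e), this is
  the energy bound divided by the regularised radicand.\<close>
lemma log_energy_derivative:
  fixes u u' :: "real \<Rightarrow> complex" and chi :: "real \<Rightarrow> real" and k e dc x :: real
  assumes k: "k > 0" and e: "e > 0" and chipos: "chi x \<ge> 0"
    and du: "(u has_vector_derivative u' x) (at x)"
    and du': "(u' has_vector_derivative - (of_real (k\<^sup>2 - (chi x)\<^sup>2) * u x)) (at x)"
    and dchi: "(chi has_real_derivative dc) (at x)"
  obtains D where
    "((\<lambda>t. log_energy (wronskian u u' x) e (energy (k + chi t) u u' t)) has_real_derivative D) (at x)"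
    and "- (\<bar>dc\<bar> / (k + chi x) + 2 * chi x) \<le> D"
proof -
  obtain Fd where dF: "((\<lambda>t. energy (k + chi t) u u' t) has_real_derivative Fd) (at x)"
    and Fd_bound: "\<bar>Fd\<bar> \<le> (\<bar>dc\<bar> / (k + chi x) + 2 * chi x)
        * sqrt ((energy (k + chi x) u u' x)\<^sup>2 - 4 * (wronskian u u' x)\<^sup>2)"
    by (rule energy_derivative[OF k chipos du du' dchi])
  define W where "W = wronskian u u' x"
  define h where "h = k + chi x"
  define F where "F = energy h u u' x"
  have hpos: "h > 0" using k chipos by (simp add: h_def)
  have radicand_nonneg: "0 \<le> F\<^sup>2 - 4 * W\<^sup>2"
    using wronskian_sq_le_energy_sq[OF hpos, of "u x" "u' x"]
    by (simp add: F_def energy_def W_def wronskian_def)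
  define s where "s = sqrt (F\<^sup>2 - 4 * W\<^sup>2 + e)"
  have spos: "s > 0" using radicand_nonneg e by (simp add: s_def)
  have Fs: "0 < F + s" using spos hpos by (simp add: F_def energy_def add_nonneg_pos)
  have "((\<lambda>t. log_energy W e (energy (k + chi t) u u' t)) has_real_derivative
      Fd * (1 + F / s) / (F + s)) (at x)"
    unfolding log_energy_def using radicand_nonneg e spos Fs
    by (auto intro!: derivative_eq_intros dF simp: F_def h_def s_def field_simps)
  moreover have "Fd * (1 + F / s) / (F + s) = Fd / s"
  proof -
    have "1 + F / s = (F + s) / s" using spos by (simp add: field_simps)
    then show ?thesis using Fs by simp
  qed
  moreover have "- (\<bar>dc\<bar> / h + 2 * chi x) \<le> Fd / s"
  proof -
    have "\<bar>Fd\<bar> \<le> (\<bar>dc\<bar> / h + 2 * chi x) * sqrt (F\<^sup>2 - 4 * W\<^sup>2)"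
      using Fd_bound by (simp add: F_def W_def h_def)
    also have "\<dots> \<le> (\<bar>dc\<bar> / h + 2 * chi x) * s"
      using hpos chipos e by (intro mult_left_mono) (auto simp: s_def)
    finally have "\<bar>Fd\<bar> / s \<le> \<bar>dc\<bar> / h + 2 * chi x"
      using spos by (simp add: divide_le_eq mult.commute)
    moreover have "- (\<bar>Fd\<bar> / s) \<le> Fd / s"
      using abs_ge_minus_self[of "Fd / s"] spos by (simp add: abs_divide)
    ultimately show ?thesis by linarith
  qed
  ultimately show ?thesis using that unfolding W_def h_def by simp
qed

lemma increasing_off_finite_set:
  fixes g :: "real \<Rightarrow> real"
  assumes "a \<le> b" "finite S" "continuous_on {a..b} g"
    and deriv: "\<And>x. x \<in> {a<..<b} - S \<Longrightarrow> \<exists>D\<ge>0. (g has_real_derivative D) (at x)"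
  shows "g a \<le> g b"
proof -
  define f where
    "f x = (if x \<in> {a<..<b} - S then SOME D. 0 \<le> D \<and> (g has_real_derivative D) (at x) else 0)" for x
  have f: "0 \<le> f x \<and> (x \<in> {a<..<b} - S \<longrightarrow> (g has_real_derivative f x) (at x))" for x
    using someI_ex[OF deriv[of x]] by (auto simp: f_def)
  have "(f has_integral (g b - g a)) {a..b}"
    by (rule fundamental_theorem_of_calculus_interior_strong[OF assms(2,1) _ assms(3)])
       (use f in \<open>auto simp: has_real_derivative_iff_has_vector_derivative\<close>)
  then have "0 \<le> g b - g a" by (rule has_integral_nonneg) (use f in auto)
  then show ?thesis by simp
qed

lemma log_energy_monotone:
  fixes u u' :: "real \<Rightarrow> complex" and chi dchi :: "real \<Rightarrow> real" and k e W sg c d :: real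
  assumes k: "k > 0" and e: "e > 0" and cd: "c \<le> d" and sg: "sg = 1 \<or> sg = -1"
    and du: "\<And>x. (u has_vector_derivative u' x) (at x)"
    and du': "\<And>x. (u' has_vector_derivative - (of_real (k\<^sup>2 - (chi x)\<^sup>2) * u x)) (at x)"
    and W: "\<And>x. wronskian u u' x = W"
    and chic: "continuous_on UNIV chi" and chipos: "\<And>x. chi x \<ge> 0"
    and S: "finite S"
    and dchi: "\<And>x. x \<in> {c<..<d} - S \<Longrightarrow> (chi has_real_derivative dchi x) (at x)"
    and sgn: "\<And>x. x \<in> {c<..<d} - S \<Longrightarrow> sg * dchi x \<ge> 0"
  defines "Phi \<equiv> \<lambda>x. log_energy W e (energy (k + chi x) u u' x)"
  shows "Phi c + sg * ln (k + chi c) \<le> Phi d + sg * ln (k + chi d) + 2 * integral {c..d} chi"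
proof -
  have hpos: "k + chi x > 0" for x using k chipos[of x] by linarith
  define L where "L x = Phi x + sg * ln (k + chi x) + 2 * integral {c..x} chi" for x
  have "continuous_on {c..d} L"
    unfolding L_def Phi_def using hpos
    by (intro continuous_intros continuous_on_subset[OF chic] indefinite_integral_continuous_1
        integrable_continuous_real continuous_on_subset[OF log_energy_continuous[OF k e du du' W chic chipos]])
       (auto simp: less_imp_neq[symmetric])
  then have "L c \<le> L d"
  proof (rule increasing_off_finite_set[OF cd S])
    fix x assume x: "x \<in> {c<..<d} - S"
    obtain D where dPhi: "((\<lambda>t. log_energy (wronskian u u' x) e (energy (k + chi t) u u' t))
        has_real_derivative D) (at x)"
      and D: "- (\<bar>dchi x\<bar> / (k + chi x) + 2 * chi x) \<le> D"
      by (rule log_energy_derivative[OF k e chipos du du' dchi[OF x]])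
    from dPhi have dPhi: "(Phi has_real_derivative D) (at x)" unfolding Phi_def W .
    have dI: "((\<lambda>y. integral {c..y} chi) has_real_derivative chi x) (at x)"
    proof -
      have "((\<lambda>y. integral {c..y} chi) has_vector_derivative chi x) (at x within {c..d})"
        by (rule integral_has_vector_derivative) (use x continuous_on_subset[OF chic] in auto)
      moreover have "at x within {c..d} = at x" using x by (intro at_within_Icc_at) auto
      ultimately show ?thesis by (simp add: has_real_derivative_iff_has_vector_derivative)
    qed
    have "(L has_real_derivative D + sg * dchi x / (k + chi x) + 2 * chi x) (at x)"
      unfolding L_def using hpos[of x]
      by (auto intro!: derivative_eq_intros dPhi dI dchi[OF x])
    moreover have "0 \<le> D + sg * dchi x / (k + chi x) + 2 * chi x"
    proof -
      have "sg * dchi x = \<bar>dchi x\<bar>" using sg sgn[OF x] by auto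
      then show ?thesis using D by simp
    qed
    ultimately show "\<exists>D'\<ge>0. (L has_real_derivative D') (at x)" by blast
  qed
  then show ?thesis by (simp add: L_def)
qed

lemma piecewise_C1_signed_derivative:
  fixes chi :: "real \<Rightarrow> real" and sg a b :: real
  assumes pw: "chi piecewise_C1_differentiable_on {a..b}"
    and mono: "mono_on {a..b} (\<lambda>x. sg * chi x)"
  obtains S D where "finite S"
    and "\<And>x. x \<in> {a<..<b} - S \<Longrightarrow> (chi has_real_derivative D x) (at x)"
    and "\<And>x. x \<in> {a<..<b} - S \<Longrightarrow> sg * D x \<ge> 0"
proof -
  obtain S D where S: "finite S"
    and dchi: "\<And>x. x \<in> {a..b} - S \<Longrightarrow> (chi has_vector_derivative D x) (at x)"
    using pw unfolding piecewise_C1_differentiable_on_def C1_differentiable_on_def by blast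
  have deriv: "(chi has_real_derivative D x) (at x)" if "x \<in> {a<..<b} - S" for x
    using dchi[of x] that by (auto simp: has_real_derivative_iff_has_vector_derivative)
  have "sg * D x \<ge> 0" if x: "x \<in> {a<..<b} - S" for x
    using mono_on_imp_deriv_nonneg[OF mono DERIV_cmult[OF deriv[OF x]]] x by simp
  with S deriv show ?thesis using that by blast
qed

lemma hump_log_energy_bound:
  fixes u u' :: "real \<Rightarrow> complex" and chi :: "real \<Rightarrow> real" and k e W x0 a b :: real
  assumes k: "k > 0" and e: "e > 0"
    and du: "\<And>x. (u has_vector_derivative u' x) (at x)"
    and du': "\<And>x. (u' has_vector_derivative - (of_real (k\<^sup>2 - (chi x)\<^sup>2) * u x)) (at x)"
    and W: "\<And>x. wronskian u u' x = W"
    and chic: "continuous_on UNIV chi" and chipos: "\<And>x. chi x \<ge> 0"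
    and pw: "\<And>a b. chi piecewise_C1_differentiable_on {a..b}"
    and up: "mono_on {..x0} chi" and down: "antimono_on {x0..} chi"
    and ab: "a \<le> x0" "x0 \<le> b"
  defines "Phi \<equiv> \<lambda>x. log_energy W e (energy (k + chi x) u u' x)"
  shows "Phi a + ln (k + chi a) \<le> Phi b - ln (k + chi b) + 2 * ln (k + chi x0) + 2 * integral {a..b} chi"
proof -
  have "mono_on {a..x0} (\<lambda>x. 1 * chi x)"
    using up by (auto intro: monotone_on_subset)
  then obtain S1 D1 where rising: "finite S1"
    "\<And>x. x \<in> {a<..<x0} - S1 \<Longrightarrow> (chi has_real_derivative D1 x) (at x)"
    "\<And>x. x \<in> {a<..<x0} - S1 \<Longrightarrow> 1 * D1 x \<ge> 0"
    using piecewise_C1_signed_derivative[OF pw] by metis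
  have "mono_on {x0..b} (\<lambda>x. -1 * chi x)"
    using down unfolding monotone_on_def by auto
  then obtain S2 D2 where falling: "finite S2"
    "\<And>x. x \<in> {x0<..<b} - S2 \<Longrightarrow> (chi has_real_derivative D2 x) (at x)"
    "\<And>x. x \<in> {x0<..<b} - S2 \<Longrightarrow> -1 * D2 x \<ge> 0"
    using piecewise_C1_signed_derivative[OF pw] by metis
  have "Phi a + 1 * ln (k + chi a) \<le> Phi x0 + 1 * ln (k + chi x0) + 2 * integral {a..x0} chi"
    unfolding Phi_def by (rule log_energy_monotone[OF k e ab(1) _ du du' W chic chipos rising]) simp
  moreover have "Phi x0 + -1 * ln (k + chi x0) \<le> Phi b + -1 * ln (k + chi b) + 2 * integral {x0..b} chi"
    unfolding Phi_def by (rule log_energy_monotone[OF k e ab(2) _ du du' W chic chipos falling]) simp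
  moreover have "integral {a..x0} chi + integral {x0..b} chi = integral {a..b} chi"
    by (rule Henstock_Kurzweil_Integration.integral_combine[OF ab])
       (rule integrable_continuous_real, rule continuous_on_subset[OF chic], auto)
  ultimately show ?thesis by simp
qed

section \<open>Asymptotics at the two ends\<close>

definition free_wave :: "real \<Rightarrow> complex \<Rightarrow> complex \<Rightarrow> real \<Rightarrow> complex" where
  "free_wave k a b x = a * exp (\<i> * of_real k * of_real x) + b * exp (- (\<i> * of_real k * of_real x))"

definition free_wave_deriv :: "real \<Rightarrow> complex \<Rightarrow> complex \<Rightarrow> real \<Rightarrow> complex" where
  "free_wave_deriv k a b x =
     \<i> * of_real k * (a * exp (\<i> * of_real k * of_real x) - b * exp (- (\<i> * of_real k * of_real x)))"

lemma free_wave_derivatives: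
  shows "(free_wave k a b has_vector_derivative free_wave_deriv k a b x) (at x)"
    and "(free_wave_deriv k a b has_vector_derivative - (of_real (k\<^sup>2) * free_wave k a b x)) (at x)"
proof -
  have exp_deriv: "((\<lambda>x::real. exp (c * of_real x)) has_vector_derivative c * exp (c * of_real x)) (at x)"
    for c :: complex
    by (rule has_vector_derivative_real_field) (auto intro!: derivative_eq_intros)
  note e1 = exp_deriv[of "\<i> * of_real k"]
  have e2: "((\<lambda>x. exp (- (\<i> * of_real k * of_real x))) has_vector_derivative
      - (\<i> * of_real k) * exp (- (\<i> * of_real k * of_real x))) (at x)"
    using exp_deriv[of "- (\<i> * of_real k)"] by simp
  show "(free_wave k a b has_vector_derivative free_wave_deriv k a b x) (at x)"
    unfolding free_wave_def[abs_def] free_wave_deriv_def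
    by (rule has_vector_derivative_eq_rhs, (rule derivative_intros e1 e2)+) (simp add: algebra_simps)
  show "(free_wave_deriv k a b has_vector_derivative - (of_real (k\<^sup>2) * free_wave k a b x)) (at x)"
    unfolding free_wave_def free_wave_deriv_def[abs_def]
    by (rule has_vector_derivative_eq_rhs, (rule derivative_intros e1 e2)+)
       (simp add: power2_eq_square algebra_simps)
qed

lemma free_wave_norms:
  "norm (a * exp (\<i> * of_real k * of_real x)) = cmod a"
  "norm (b * exp (- (\<i> * of_real k * of_real x))) = cmod b"
  by (simp_all add: norm_mult norm_exp_eq_Re)

lemma free_wave_bounded:
  assumes k: "k \<ge> 0"
  shows "norm (free_wave k a b x) \<le> (cmod a + cmod b) * (1 + k)"
    and "norm (free_wave_deriv k a b x) \<le> (cmod a + cmod b) * (1 + k)"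
proof -
  have sum: "norm (free_wave k a b x) \<le> cmod a + cmod b"
    using norm_triangle_ineq[of "a * exp (\<i> * of_real k * of_real x)" "b * exp (- (\<i> * of_real k * of_real x))"]
    by (simp add: free_wave_def free_wave_norms)
  have diff: "norm (a * exp (\<i> * of_real k * of_real x) - b * exp (- (\<i> * of_real k * of_real x))) \<le> cmod a + cmod b"
    using norm_triangle_ineq4[of "a * exp (\<i> * of_real k * of_real x)" "b * exp (- (\<i> * of_real k * of_real x))"]
    by (simp add: free_wave_norms)
  have "norm (free_wave_deriv k a b x) \<le> k * (cmod a + cmod b)"
    using diff k by (simp add: free_wave_deriv_def norm_mult mult_left_mono)
  moreover have "cmod a + cmod b \<le> (cmod a + cmod b) * (1 + k)" "k * (cmod a + cmod b) \<le> (cmod a + cmod b) * (1 + k)"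
    using k by (simp_all add: algebra_simps)
  ultimately show "norm (free_wave k a b x) \<le> (cmod a + cmod b) * (1 + k)"
    and "norm (free_wave_deriv k a b x) \<le> (cmod a + cmod b) * (1 + k)"
    using sum by linarith+
qed

lemma free_wave_energy_wronskian:
  assumes k: "k > 0"
  shows "energy k (free_wave k a b) (free_wave_deriv k a b) x = 2 * k * ((cmod a)\<^sup>2 + (cmod b)\<^sup>2)"
    and "wronskian (free_wave k a b) (free_wave_deriv k a b) x = k * ((cmod a)\<^sup>2 - (cmod b)\<^sup>2)"
proof -
  define A where "A = a * exp (\<i> * of_real k * of_real x)"
  define B where "B = b * exp (- (\<i> * of_real k * of_real x))"
  have nA: "cmod A = cmod a" and nB: "cmod B = cmod b"
    unfolding A_def B_def by (rule free_wave_norms)+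
  have w: "free_wave k a b x = A + B" and w': "free_wave_deriv k a b x = \<i> * of_real k * (A - B)"
    by (simp_all add: free_wave_def free_wave_deriv_def A_def B_def)
  have parallelogram: "(cmod (A + B))\<^sup>2 + (cmod (A - B))\<^sup>2 = 2 * (cmod A)\<^sup>2 + 2 * (cmod B)\<^sup>2"
    unfolding cmod_power2 by (simp add: power2_eq_square algebra_simps)
  have "(cmod (free_wave_deriv k a b x))\<^sup>2 / k = k * (cmod (A - B))\<^sup>2"
    using k by (simp add: w' norm_mult power2_eq_square)
  then have "energy k (free_wave k a b) (free_wave_deriv k a b) x
      = k * ((cmod (A + B))\<^sup>2 + (cmod (A - B))\<^sup>2)"
    by (simp add: energy_def w algebra_simps)
  also have "\<dots> = 2 * k * ((cmod a)\<^sup>2 + (cmod b)\<^sup>2)"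
    unfolding parallelogram nA nB by (simp add: algebra_simps)
  finally show "energy k (free_wave k a b) (free_wave_deriv k a b) x = 2 * k * ((cmod a)\<^sup>2 + (cmod b)\<^sup>2)" .
  show "wronskian (free_wave k a b) (free_wave_deriv k a b) x = k * ((cmod a)\<^sup>2 - (cmod b)\<^sup>2)"
    unfolding wronskian_def w w' nA[symmetric] nB[symmetric] cmod_power2
    by (simp add: power2_eq_square algebra_simps)
qed

lemma tendsto_zero_mult_bounded:
  fixes f g :: "'b \<Rightarrow> 'a::real_normed_algebra"
  assumes "(f \<longlongrightarrow> 0) F" "\<And>x. norm (g x) \<le> B"
  shows "((\<lambda>x. f x * g x) \<longlongrightarrow> 0) F"
proof (rule tendsto_0_le[OF assms(1), where K=B])
  show "\<forall>\<^sub>F x in F. norm (f x * g x) \<le> norm (f x) * B"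
    using assms(2) by (intro always_eventually allI order.trans[OF norm_mult_ineq] mult_left_mono) auto
qed

lemma tendsto_product_difference:
  fixes a b c d :: "'b \<Rightarrow> 'a::real_normed_field"
  assumes ab: "((\<lambda>x. a x - b x) \<longlongrightarrow> 0) F" and cd: "((\<lambda>x. c x - d x) \<longlongrightarrow> 0) F"
    and "\<And>x. norm (b x) \<le> B" "\<And>x. norm (d x) \<le> D"
  shows "((\<lambda>x. a x * c x - b x * d x) \<longlongrightarrow> 0) F"
proof -
  have split: "a x * c x - b x * d x = (a x - b x) * (c x - d x) + (a x - b x) * d x + (c x - d x) * b x" for x
    by (simp add: algebra_simps)
  have "((\<lambda>x. (a x - b x) * (c x - d x) + (a x - b x) * d x + (c x - d x) * b x) \<longlongrightarrow> 0 * 0 + 0 + 0) F"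
    by (intro tendsto_add tendsto_mult ab cd tendsto_zero_mult_bounded[OF ab assms(4)]
        tendsto_zero_mult_bounded[OF cd assms(3)])
  then show ?thesis unfolding split by simp
qed

lemma derivative_bound_unit_interval:
  fixes v v' v'' :: "real \<Rightarrow> complex"
  assumes d1: "\<And>t. (v has_vector_derivative v' t) (at t)"
    and d2: "\<And>t. (v' has_vector_derivative v'' t) (at t)"
    and bound: "\<And>t. t \<in> {x..x+1} \<Longrightarrow> norm (v t) \<le> e \<and> norm (v'' t) \<le> e"
  shows "norm (v' x) \<le> 3 * e"
proof -
  have cont1: "continuous_on S v" and cont2: "continuous_on S v'" for S
    using d1 d2 by (meson continuous_at_imp_continuous_on has_vector_derivative_continuous)+
  have e0: "e \<ge> 0" using bound[of x] by (meson atLeastAtMost_iff less_add_one less_eq_real_def norm_ge_zero order_trans)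
  have lin: "((*) e has_vector_derivative e) (at s)" for s
    unfolding has_real_derivative_iff_has_vector_derivative[symmetric] by (auto intro!: derivative_eq_intros)
  text \<open>v' varies by at most e over the interval, since |v''| \<le> e.\<close>
  have v'_close: "norm (v' t - v' x) \<le> e" if t: "t \<in> {x..x+1}" for t
  proof (cases "t = x")
    case False
    with t have xt: "x < t" by auto
    have "norm (v' t - v' x) \<le> e * t - e * x"
      by (rule differentiable_bound_general[OF xt cont2 _ d2 lin]) (use bound t in \<open>auto intro: continuous_intros\<close>)
    also have "\<dots> \<le> e" using t e0 by (simp add: right_diff_distrib[symmetric] mult_left_le)
    finally show ?thesis .
  qed (use e0 in simp)
  text \<open>Hence v(x+1) - v(x) differs from v'(x) by at most e.\<close>
  define g where "g s = v s - s *\<^sub>R v' x" for s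
  have "norm (g (x+1) - g x) \<le> e * (x+1) - e * x"
  proof (rule differentiable_bound_general[of x "x+1" g "\<lambda>s. e * s" "\<lambda>s. v' s - v' x" "\<lambda>_. e"])
    show "(g has_vector_derivative v' s - v' x) (at s)" for s unfolding g_def
      by (rule has_vector_derivative_diff[OF d1]) (rule has_vector_derivative_eq_rhs, (rule derivative_intros)+, simp)
  qed (use v'_close lin in \<open>auto simp: g_def intro!: continuous_intros cont1\<close>)
  then have "norm (v (x+1) - v x - v' x) \<le> e" by (simp add: g_def algebra_simps scaleR_add_left)
  moreover have "norm (v' x) \<le> norm (v (x+1)) + norm (v x) + norm (v (x+1) - v x - v' x)"
    using norm_triangle_ineq4[of "v (x+1) - v x" "v (x+1) - v x - v' x"] norm_triangle_ineq4[of "v (x+1)" "v x"]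
    by simp
  ultimately show ?thesis using bound[of x] bound[of "x+1"] by auto
qed

lemma unit_window_at_top:
  "eventually P at_top \<Longrightarrow> eventually (\<lambda>x. \<forall>t\<in>{x..x+1}. P t) (at_top::real filter)"
  unfolding eventually_at_top_linorder by (metis atLeastAtMost_iff order_trans)

lemma unit_window_at_bot:
  "eventually P at_bot \<Longrightarrow> eventually (\<lambda>x. \<forall>t\<in>{x..x+1}. P t) (at_bot::real filter)"
proof -
  assume "eventually P at_bot"
  then obtain N where N: "\<And>n. n \<le> N \<Longrightarrow> P n" by (auto simp: eventually_at_bot_linorder)
  show ?thesis unfolding eventually_at_bot_linorder by (rule exI[of _ "N - 1"]) (auto intro!: N)
qed

lemma derivative_tendsto_zero:
  fixes v v' v'' :: "real \<Rightarrow> complex"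
  assumes d1: "\<And>t. (v has_vector_derivative v' t) (at t)"
    and d2: "\<And>t. (v' has_vector_derivative v'' t) (at t)"
    and l1: "(v \<longlongrightarrow> 0) F" and l2: "(v'' \<longlongrightarrow> 0) F"
    and window: "\<And>P. eventually P F \<Longrightarrow> eventually (\<lambda>x. \<forall>t\<in>{x..x+1}. P t) F"
  shows "(v' \<longlongrightarrow> 0) F"
proof (rule tendstoI)
  fix \<epsilon> :: real assume \<epsilon>: "\<epsilon> > 0"
  have "eventually (\<lambda>t. dist (v t) 0 < \<epsilon>/4) F" using l1 \<epsilon> by (intro tendstoD) auto
  moreover have "eventually (\<lambda>t. dist (v'' t) 0 < \<epsilon>/4) F" using l2 \<epsilon> by (intro tendstoD) auto
  ultimately have "eventually (\<lambda>t. norm (v t) \<le> \<epsilon>/4 \<and> norm (v'' t) \<le> \<epsilon>/4) F"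
    by eventually_elim auto
  from window[OF this] show "eventually (\<lambda>x. dist (v' x) 0 < \<epsilon>) F"
  proof eventually_elim
    case (elim x)
    have "norm (v' x) \<le> 3 * (\<epsilon>/4)" by (rule derivative_bound_unit_interval[OF d1 d2]) (use elim in auto)
    then show ?case using \<epsilon> by simp
  qed
qed

lemma asymptotic_derivative:
  fixes u u' w w' :: "real \<Rightarrow> complex" and q :: "real \<Rightarrow> real" and k B :: real
  assumes du: "\<And>x. (u has_vector_derivative u' x) (at x)"
    and du': "\<And>x. (u' has_vector_derivative (- (complex_of_real (q x) * u x))) (at x)"
    and dw: "\<And>x. (w has_vector_derivative w' x) (at x)"
    and dw': "\<And>x. (w' has_vector_derivative (- (complex_of_real (k\<^sup>2) * w x))) (at x)"
    and l: "((\<lambda>x. u x - w x) \<longlongrightarrow> 0) F" and ql: "(q \<longlongrightarrow> k\<^sup>2) F"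
    and bw: "\<And>x. norm (w x) \<le> B"
    and window: "\<And>P. eventually P F \<Longrightarrow> eventually (\<lambda>x. \<forall>t\<in>{x..x+1}. P t) F"
  shows "((\<lambda>x. u' x - w' x) \<longlongrightarrow> 0) F"
proof (rule derivative_tendsto_zero[OF has_vector_derivative_diff[OF du dw]
      has_vector_derivative_diff[OF du' dw'] l _ window])
  have split: "- (complex_of_real (q t) * u t) - - (complex_of_real (k\<^sup>2) * w t)
     = - (complex_of_real (q t) * (u t - w t)) + complex_of_real (k\<^sup>2 - q t) * w t" for t
    by (simp add: algebra_simps)
  have q': "((\<lambda>t. complex_of_real (q t)) \<longlongrightarrow> complex_of_real (k\<^sup>2)) F"
    using ql by (rule tendsto_of_real)
  have "((\<lambda>t. k\<^sup>2 - q t) \<longlongrightarrow> k\<^sup>2 - k\<^sup>2) F" by (intro tendsto_intros ql)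
  then have "((\<lambda>t. complex_of_real (k\<^sup>2 - q t)) \<longlongrightarrow> 0) F" by (metis diff_self of_real_0 tendsto_of_real)
  then have "((\<lambda>t. - (complex_of_real (q t) * (u t - w t)) + complex_of_real (k\<^sup>2 - q t) * w t)
      \<longlongrightarrow> - (complex_of_real (k\<^sup>2) * 0) + 0) F"
    by (intro tendsto_add tendsto_minus tendsto_mult q' l tendsto_zero_mult_bounded[OF _ bw])
  then show "((\<lambda>t. - (complex_of_real (q t) * u t) - - (complex_of_real (k\<^sup>2) * w t)) \<longlongrightarrow> 0) F"
    unfolding split by simp
qed

lemma energy_wronskian_asymptotics:
  fixes u u' w w' :: "real \<Rightarrow> complex" and h :: "real \<Rightarrow> real"
  assumes l1: "((\<lambda>x. u x - w x) \<longlongrightarrow> 0) F" and l2: "((\<lambda>x. u' x - w' x) \<longlongrightarrow> 0) F"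
    and b1: "\<And>x. norm (w x) \<le> B" and b2: "\<And>x. norm (w' x) \<le> B"
    and hl: "(h \<longlongrightarrow> k) F" and k: "k \<noteq> 0"
  shows "((\<lambda>x. energy (h x) u u' x - energy k w w' x) \<longlongrightarrow> 0) F"
    and "((\<lambda>x. wronskian u u' x - wronskian w w' x) \<longlongrightarrow> 0) F"
proof -
  have cnj_lim: "((\<lambda>x. cnj (v x) - cnj (z x)) \<longlongrightarrow> 0) F"
    if "((\<lambda>x. v x - z x) \<longlongrightarrow> 0) F" for v z :: "real \<Rightarrow> complex"
    using tendsto_cnj[OF that] by simp
  have sq_lim: "((\<lambda>x. (cmod (v x))\<^sup>2 - (cmod (z x))\<^sup>2) \<longlongrightarrow> 0) F"
    if l: "((\<lambda>x. v x - z x) \<longlongrightarrow> 0) F" and b: "\<And>x. norm (z x) \<le> B" for v z :: "real \<Rightarrow> complex"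
  proof -
    have "((\<lambda>x. v x * cnj (v x) - z x * cnj (z x)) \<longlongrightarrow> 0) F"
      by (rule tendsto_product_difference[OF l cnj_lim[OF l] b, where D=B]) (simp add: b)
    then have "((\<lambda>x. complex_of_real ((cmod (v x))\<^sup>2 - (cmod (z x))\<^sup>2)) \<longlongrightarrow> 0) F"
      by (simp only: of_real_diff complex_norm_square)
    then show ?thesis by (metis of_real_0 tendsto_of_real_iff)
  qed
  have hk: "((\<lambda>x. h x - k) \<longlongrightarrow> 0) F" using tendsto_diff[OF hl tendsto_const[of k]] by simp
  have hk': "((\<lambda>x. 1 / h x - 1 / k) \<longlongrightarrow> 0) F"
    using tendsto_diff[OF tendsto_divide[OF tendsto_const[of 1] hl] tendsto_const[of "1/k"]] k by simp
  have bw: "norm ((cmod (w x))\<^sup>2) \<le> B\<^sup>2" "norm ((cmod (w' x))\<^sup>2) \<le> B\<^sup>2" for x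
    using b1[of x] b2[of x] by (simp_all add: power_mono)
  have split: "energy (h x) u u' x - energy k w w' x
    = h x * ((cmod (u x))\<^sup>2 - (cmod (w x))\<^sup>2) + ((cmod (u' x))\<^sup>2 - (cmod (w' x))\<^sup>2) * (1 / h x)
      + (h x - k) * (cmod (w x))\<^sup>2 + (1 / h x - 1 / k) * (cmod (w' x))\<^sup>2" for x
    by (simp add: energy_def divide_inverse algebra_simps)
  have "((\<lambda>x. h x * ((cmod (u x))\<^sup>2 - (cmod (w x))\<^sup>2) + ((cmod (u' x))\<^sup>2 - (cmod (w' x))\<^sup>2) * (1 / h x)
      + (h x - k) * (cmod (w x))\<^sup>2 + (1 / h x - 1 / k) * (cmod (w' x))\<^sup>2) \<longlongrightarrow> k * 0 + 0 * (1/k) + 0 + 0) F"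
    by (intro tendsto_add tendsto_mult hl sq_lim[OF l1 b1] sq_lim[OF l2 b2] tendsto_divide tendsto_const
        tendsto_zero_mult_bounded[OF hk bw(1)] tendsto_zero_mult_bounded[OF hk' bw(2)]) (use k in auto)
  then show "((\<lambda>x. energy (h x) u u' x - energy k w w' x) \<longlongrightarrow> 0) F"
    unfolding split by simp
  have "((\<lambda>x. cnj (u x) * u' x - cnj (w x) * w' x) \<longlongrightarrow> 0) F"
    by (rule tendsto_product_difference[OF cnj_lim[OF l1] l2 _ b2, where B=B]) (simp add: b1)
  from tendsto_Im[OF this] show "((\<lambda>x. wronskian u u' x - wronskian w w' x) \<longlongrightarrow> 0) F"
    by (simp add: wronskian_def)
qed

lemma scattering_limits:
  fixes u u' :: "real \<Rightarrow> complex" and q h :: "real \<Rightarrow> real" and k W :: real and a b :: complex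
  assumes k: "k > 0" and F: "F \<noteq> bot"
    and window: "\<And>P. eventually P F \<Longrightarrow> eventually (\<lambda>x. \<forall>t\<in>{x..x+1}. P t) F"
    and du: "\<And>x. (u has_vector_derivative u' x) (at x)"
    and du': "\<And>x. (u' has_vector_derivative - (of_real (q x) * u x)) (at x)"
    and q: "(q \<longlongrightarrow> k\<^sup>2) F" and h: "(h \<longlongrightarrow> k) F"
    and W: "\<And>x. wronskian u u' x = W"
    and asym: "((\<lambda>x. u x - free_wave k a b x) \<longlongrightarrow> 0) F"
  shows "((\<lambda>x. energy (h x) u u' x) \<longlongrightarrow> 2 * k * ((cmod a)\<^sup>2 + (cmod b)\<^sup>2)) F"
    and "W = k * ((cmod a)\<^sup>2 - (cmod b)\<^sup>2)"
proof -
  note bounds = free_wave_bounded[of k a b] and wave = free_wave_energy_wronskian[OF k, of a b]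
  have asym': "((\<lambda>x. u' x - free_wave_deriv k a b x) \<longlongrightarrow> 0) F"
    using k by (intro asymptotic_derivative[OF du du' free_wave_derivatives asym q bounds(1) window]) simp
  note lims = energy_wronskian_asymptotics[OF asym asym' bounds h] 
  from lims(1) k show "((\<lambda>x. energy (h x) u u' x) \<longlongrightarrow> 2 * k * ((cmod a)\<^sup>2 + (cmod b)\<^sup>2)) F"
    unfolding wave by (simp add: LIM_zero_iff)
  from lims(2) k have "((\<lambda>x. W - k * ((cmod a)\<^sup>2 - (cmod b)\<^sup>2)) \<longlongrightarrow> 0) F"
    unfolding wave W by simp
  with F show "W = k * ((cmod a)\<^sup>2 - (cmod b)\<^sup>2)" by (simp add: tendsto_const_iff)
qed

section \<open>From the limiting inequality to the sech bound\<close>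

lemma tendsto_log_energy:
  fixes f :: "'b \<Rightarrow> real"
  assumes lim: "(f \<longlongrightarrow> E) F" and F: "F \<noteq> bot" and e: "e > 0" and ge: "\<And>x. 2 * \<bar>W\<bar> \<le> f x"
  shows "((\<lambda>x. log_energy W e (f x)) \<longlongrightarrow> log_energy W e E) F"
proof -
  have "2 * \<bar>W\<bar> \<le> E" by (rule tendsto_lowerbound[OF lim]) (simp_all add: ge F)
  from log_energy_arg_pos(2)[OF this e] show ?thesis
    unfolding log_energy_def by (intro tendsto_intros lim) auto
qed

lemma tendsto_two_sided_le:
  fixes f g :: "real \<Rightarrow> real"
  assumes f: "(f \<longlongrightarrow> A) at_bot" and g: "(g \<longlongrightarrow> B) at_top"
    and le: "\<And>a b. a \<le> x0 \<Longrightarrow> x0 \<le> b \<Longrightarrow> f a \<le> g b"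
  shows "A \<le> B"
proof (rule tendsto_lowerbound[OF g])
  show "eventually (\<lambda>b. A \<le> g b) at_top"
    using eventually_ge_at_top[of x0]
  proof eventually_elim
    case (elim b)
    have "eventually (\<lambda>a. f a \<le> g b) at_bot"
      using eventually_le_at_bot[of x0] by eventually_elim (use le elim in auto)
    then show ?case by (rule tendsto_upperbound[OF f]) simp
  qed
qed simp

lemma le_of_sqrt_epsilon:
  fixes A B C :: real
  assumes C: "C \<ge> 0" and H: "\<And>e. e > 0 \<Longrightarrow> A \<le> B + C * sqrt e"
  shows "A \<le> B"
proof (rule ccontr)
  assume "\<not> A \<le> B"
  then have d: "A - B > 0" by simp
  define e where "e = ((A - B) / (C + 1))\<^sup>2"
  have e0: "e > 0" using d C by (simp add: e_def)
  have "C * sqrt e = C * ((A - B) / (C + 1))" using d C by (simp add: e_def)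
  also have "\<dots> < (C + 1) * ((A - B) / (C + 1))"
    using d C by (intro mult_strict_right_mono) auto
  also have "\<dots> = A - B" using C by simp
  finally show False using H[OF e0] by simp
qed

text \<open>The factor (h0/k)^2 coming from ln h at the top of the hump is at most
  exp (2 (h0 - k)/k).\<close>
lemma sq_ratio_le_exp:
  fixes k h :: real
  assumes k: "k > 0" and h: "k \<le> h"
  shows "(h / k)\<^sup>2 \<le> exp (2 * ((h - k) / k))"
proof -
  have "h / k = 1 + (h - k) / k" using k by (simp add: field_simps)
  also have "\<dots> \<le> exp ((h - k) / k)" by (rule exp_ge_add_one_self)
  finally have "(h / k)\<^sup>2 \<le> (exp ((h - k) / k))\<^sup>2" using k h by (intro power_mono) auto
  then show ?thesis by (simp add: power2_eq_square exp_add[symmetric])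
qed

text \<open>The limiting energy inequality for one regularisation parameter e, with energies
  2k(1+R) at -\<infinity> and 2kT at +\<infinity> and Wronskian kT = k(1-R), exponentiated: it bounds the
  reflection term up to an error of order sqrt e.\<close>
lemma reflection_transmission_approx:
  fixes k R T W h0 J e :: real
  assumes k: "k > 0" and R: "R \<ge> 0" and T: "T \<ge> 0" and WT: "W = k * T" and WR: "W = k * (1 - R)"
    and h0: "k \<le> h0" and e: "e > 0"
    and H: "log_energy W e (2 * k * (1 + R)) + ln k \<le> log_energy W e (2 * k * T) - ln k + 2 * ln h0 + 2 * J"
  shows "2*k^3*(1 + sqrt R)\<^sup>2 \<le> 2*k*T*h0\<^sup>2*exp (2*J) + (h0\<^sup>2*exp (2*J)) * sqrt e"
proof -
  have rad_in: "(2*k*(1+R))\<^sup>2 - 4*W\<^sup>2 = 16*k\<^sup>2*R" unfolding WR by (simp add: power2_eq_square algebra_simps)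
  have rad_out: "(2*k*T)\<^sup>2 - 4*W\<^sup>2 = 0" unfolding WT by (simp add: power2_eq_square algebra_simps)
  define Pin where "Pin = 2*k*(1+R) + sqrt (16*k\<^sup>2*R + e)"
  define Pout where "Pout = 2*k*T + sqrt e"
  have Pin0: "Pin > 0" unfolding Pin_def using k R e by (intro add_pos_nonneg) auto
  have Pout0: "Pout > 0" unfolding Pout_def using k T e by (intro add_nonneg_pos) auto
  have h0p: "h0 > 0" using k h0 by linarith
  have "ln Pin + ln k \<le> ln Pout - ln k + 2 * ln h0 + 2 * J"
    using H unfolding log_energy_def rad_in rad_out Pin_def Pout_def by simp
  then have "ln (Pin * k * k) \<le> ln (Pout * h0\<^sup>2 * exp (2*J))"
    using Pin0 Pout0 k h0p by (simp add: ln_mult power2_eq_square)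
  then have le: "Pin * k * k \<le> Pout * h0\<^sup>2 * exp (2*J)"
    using Pin0 Pout0 k h0p by simp
  have "4*k * sqrt R = sqrt (16*k\<^sup>2*R)" using k R by (simp add: real_sqrt_mult)
  also have "\<dots> \<le> sqrt (16*k\<^sup>2*R + e)" using e by simp
  finally have "2*k*(1 + sqrt R)\<^sup>2 \<le> Pin"
    unfolding Pin_def using R by (simp add: power2_eq_square algebra_simps)
  then have "2*k*(1 + sqrt R)\<^sup>2 * (k*k) \<le> Pin * (k * k)" using k by (intro mult_right_mono) auto
  then have "2*k^3*(1 + sqrt R)\<^sup>2 \<le> Pin * k * k" by (simp add: power3_eq_cube algebra_simps)
  also have "\<dots> \<le> Pout * h0\<^sup>2 * exp (2*J)" by (rule le)
  also have "\<dots> = 2*k*T*h0\<^sup>2*exp (2*J) + (h0\<^sup>2*exp (2*J)) * sqrt e" by (simp add: Pout_def algebra_simps)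
  finally show ?thesis .
qed

lemma reflection_transmission_inequality:
  fixes k R T W h0 J :: real
  assumes k: "k > 0" and R: "R \<ge> 0" and T: "T \<ge> 0" and WT: "W = k * T" and WR: "W = k * (1 - R)"
    and h0: "k \<le> h0"
    and H: "\<And>e. e > 0 \<Longrightarrow>
      log_energy W e (2 * k * (1 + R)) + ln k \<le> log_energy W e (2 * k * T) - ln k + 2 * ln h0 + 2 * J"
  shows "(1 + sqrt R)\<^sup>2 \<le> T * exp (2 * ((h0 - k) / k + J))"
proof -
  have "2*k^3*(1 + sqrt R)\<^sup>2 \<le> 2*k*T*h0\<^sup>2*exp (2*J)"
  proof (rule le_of_sqrt_epsilon)
    show "2*k^3*(1 + sqrt R)\<^sup>2 \<le> 2*k*T*h0\<^sup>2*exp (2*J) + (h0\<^sup>2*exp (2*J)) * sqrt e" if "e > 0" for e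
      by (rule reflection_transmission_approx[OF k R T WT WR h0 that H[OF that]])
  qed simp
  then have "(2*k^3)*(1 + sqrt R)\<^sup>2 \<le> (2*k^3) * (T * (h0/k)\<^sup>2 * exp (2*J))"
    using k by (simp add: power_divide power3_eq_cube power2_eq_square field_simps)
  then have "(1 + sqrt R)\<^sup>2 \<le> T * (h0/k)\<^sup>2 * exp (2*J)"
    using k by (subst (asm) mult_le_cancel_left_pos) auto
  also have "\<dots> \<le> T * exp (2 * ((h0 - k) / k)) * exp (2*J)"
    using sq_ratio_le_exp[OF k h0] T by (intro mult_right_mono mult_left_mono) auto
  also have "\<dots> = T * exp (2 * ((h0 - k) / k + J))" by (simp add: exp_add[symmetric] algebra_simps)
  finally show ?thesis .
qed

lemma sech_sq_le_transmission:
  fixes T s \<theta> :: real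
  assumes s0: "0 \<le> s" and sT: "s\<^sup>2 = 1 - T" and ineq: "(1+s)\<^sup>2 \<le> T * exp (2*\<theta>)"
  shows "(sech \<theta>)\<^sup>2 \<le> T"
proof -
  define y where "y = exp \<theta>"
  have y0: "y > 0" by (simp add: y_def)
  define E where "E = y\<^sup>2"
  have E0: "E > 0" using y0 by (simp add: E_def)
  have Ee: "exp (2*\<theta>) = E" unfolding E_def y_def power2_eq_square by (simp only: mult_2 exp_add)
  have T: "T = (1-s)*(1+s)" using sT by (simp add: power2_eq_square algebra_simps)
  have "(1+s)*(1+s) \<le> ((1-s)*E)*(1+s)" using ineq unfolding Ee T by (simp add: power2_eq_square algebra_simps)
  then have "1+s \<le> (1-s)*E" using mult_right_le_imp_le[where a="1+s" and b="(1-s)*E" and c="1+s"] s0 by simp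
  then have "s*(E+1) \<le> E - 1" by (simp add: algebra_simps)
  then have "s \<le> (E-1)/(E+1)" using E0 by (subst pos_le_divide_eq) auto
  then have "s\<^sup>2 \<le> ((E-1)/(E+1))\<^sup>2" using s0 by (intro power_mono) auto
  moreover have "(sech \<theta>)\<^sup>2 = 1 - ((E-1)/(E+1))\<^sup>2"
  proof -
    have "cosh \<theta> = (y + inverse y)/2" unfolding cosh_def y_def exp_minus by simp
    moreover have "y + inverse y = (E+1)/y" using y0 unfolding E_def by (simp add: field_simps power2_eq_square)
    ultimately have "sech \<theta> = 2*y/(E+1)" unfolding sech_def using y0 E0 by simp
    then have "(sech \<theta>)\<^sup>2 = 4*E/(E+1)\<^sup>2" unfolding E_def by (simp add: power_divide power_mult_distrib)
    also have "\<dots> = 1 - ((E-1)/(E+1))\<^sup>2" using E0 by (simp add: divide_simps) (simp add: power2_eq_square algebra_simps)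
    finally show ?thesis .
  qed
  ultimately show ?thesis using sT by linarith
qed

lemma hump_maximum:
  fixes f :: "real \<Rightarrow> real"
  assumes up: "mono_on {..x0} f" and down: "antimono_on {x0..} f"
  shows "(SUP x. f x) = f x0"
proof (rule cSup_eq_maximum)
  show "z \<le> f x0" if "z \<in> range f" for z
  proof -
    obtain x where z: "z = f x" using \<open>z \<in> range f\<close> by blast
    show ?thesis
      using up down unfolding z monotone_on_def by (cases "x \<le> x0") auto
  qed
qed simp

lemma integral_le_nn_integral:
  fixes f :: "real \<Rightarrow> real"
  assumes cont: "continuous_on {a..b} f" and nonneg: "\<And>x. f x \<ge> 0"
    and finite: "(\<integral>\<^sup>+ x. ennreal (f x) \<partial>lborel) \<noteq> \<infinity>"
  shows "integral {a..b} f \<le> enn2real (\<integral>\<^sup>+ x. ennreal (f x) \<partial>lborel)"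
proof -
  have int: "f integrable_on {a..b}" using cont by (rule integrable_continuous_real)
  have "(\<integral>\<^sup>+ x. ennreal (indicator {a..b} x * f x) \<partial>lborel) = ennreal (integral {a..b} f)"
    using nn_integral_has_integral_lebesgue[OF _ integrable_integral[OF int]] nonneg by simp
  moreover have "(\<integral>\<^sup>+ x. ennreal (indicator {a..b} x * f x) \<partial>lborel) \<le> (\<integral>\<^sup>+ x. ennreal (f x) \<partial>lborel)"
    by (intro nn_integral_mono ennreal_leI) (auto simp: indicator_def nonneg)
  ultimately have "ennreal (integral {a..b} f) \<le> (\<integral>\<^sup>+ x. ennreal (f x) \<partial>lborel)" by simp
  then have "enn2real (ennreal (integral {a..b} f)) \<le> enn2real (\<integral>\<^sup>+ x. ennreal (f x) \<partial>lborel)"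
    using finite by (intro enn2real_mono) (auto simp: top.not_eq_extremum)
  moreover have "integral {a..b} f \<ge> 0" by (rule integral_nonneg[OF int]) (use nonneg in auto)
  ultimately show ?thesis by simp
qed

lemma hump_transmission_bound:
  fixes chi :: "real \<Rightarrow> real" and u u' :: "real \<Rightarrow> complex" and k x0 J :: real and r \<tau> :: complex
  assumes k: "k > 0"
    and chic: "continuous_on UNIV chi" and chipos: "\<And>x. chi x \<ge> 0"
    and pw: "\<And>a b. chi piecewise_C1_differentiable_on {a..b}"
    and up: "mono_on {..x0} chi" and down: "antimono_on {x0..} chi"
    and chi_top: "(chi \<longlongrightarrow> 0) at_top" and chi_bot: "(chi \<longlongrightarrow> 0) at_bot"
    and du: "\<And>x. (u has_vector_derivative u' x) (at x)"
    and du': "\<And>x. (u' has_vector_derivative - (of_real (k\<^sup>2 - (chi x)\<^sup>2) * u x)) (at x)"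
    and incoming: "((\<lambda>x. u x - free_wave k 1 r x) \<longlongrightarrow> 0) at_bot"
    and outgoing: "((\<lambda>x. u x - free_wave k \<tau> 0 x) \<longlongrightarrow> 0) at_top"
    and J: "\<And>a b. integral {a..b} chi \<le> J"
  shows "(sech (chi x0 / k + J))\<^sup>2 \<le> (cmod \<tau>)\<^sup>2"
proof -
  define T R where "T = (cmod \<tau>)\<^sup>2" and "R = (cmod r)\<^sup>2"
  obtain W where W: "\<And>x. wronskian u u' x = W" using wronskian_constant[OF du du'] by blast
  have q_lim: "((\<lambda>x. k\<^sup>2 - (chi x)\<^sup>2) \<longlongrightarrow> k\<^sup>2) F" and h_lim: "((\<lambda>x. k + chi x) \<longlongrightarrow> k) F"
    if "(chi \<longlongrightarrow> 0) F" for F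
    using that by (auto intro!: tendsto_eq_intros)
  note out = scattering_limits[OF k trivial_limit_at_top_linorder unit_window_at_top du du' q_lim[OF chi_top]
      h_lim[OF chi_top] W outgoing]
  note inc = scattering_limits[OF k trivial_limit_at_bot_linorder unit_window_at_bot du du' q_lim[OF chi_bot]
      h_lim[OF chi_bot] W incoming]
  have hpos: "k + chi x > 0" for x using k chipos[of x] by linarith
  have "log_energy W e (2 * k * (1 + R)) + ln k
      \<le> log_energy W e (2 * k * T) - ln k + 2 * ln (k + chi x0) + 2 * J" if e: "e > 0" for e
  proof (rule tendsto_two_sided_le)
    note admissible = wronskian_le_energy[OF hpos, of u u', unfolded W]
    show "((\<lambda>a. log_energy W e (energy (k + chi a) u u' a) + ln (k + chi a))
        \<longlongrightarrow> log_energy W e (2 * k * (1 + R)) + ln k) at_bot"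
      using inc(1) h_lim[OF chi_bot] k
      by (intro tendsto_intros tendsto_log_energy[OF _ trivial_limit_at_bot_linorder e admissible]) (simp_all add: R_def)
    show "((\<lambda>b. log_energy W e (energy (k + chi b) u u' b) - ln (k + chi b) + 2 * ln (k + chi x0) + 2 * J)
        \<longlongrightarrow> log_energy W e (2 * k * T) - ln k + 2 * ln (k + chi x0) + 2 * J) at_top"
      using out(1) h_lim[OF chi_top] k
      by (intro tendsto_intros tendsto_log_energy[OF _ trivial_limit_at_top_linorder e admissible]) (simp_all add: T_def)
    show "log_energy W e (energy (k + chi a) u u' a) + ln (k + chi a)
        \<le> log_energy W e (energy (k + chi b) u u' b) - ln (k + chi b) + 2 * ln (k + chi x0) + 2 * J"
      if "a \<le> x0" "x0 \<le> b" for a b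
      using hump_log_energy_bound[OF k e du du' W chic chipos pw up down that] J[of a b] by simp
  qed
  then have "(1 + sqrt R)\<^sup>2 \<le> T * exp (2 * ((k + chi x0 - k) / k + J))"
    using out(2) inc(2) chipos[of x0] k
    by (intro reflection_transmission_inequality) (auto simp: T_def R_def)
  then have ineq: "(1 + sqrt R)\<^sup>2 \<le> T * exp (2 * (chi x0 / k + J))" by simp
  have "(sqrt R)\<^sup>2 = 1 - T" using out(2) inc(2) k by (simp add: T_def R_def)
  from sech_sq_le_transmission[OF _ this ineq] show ?thesis by (simp add: T_def R_def)
qed

theorem mainTheorem12:
  fixes q :: "real \<Rightarrow> real" and kinf :: real and x0 :: real
    and u :: "real \<Rightarrow> complex" and r \<tau> :: complex
  assumes kinf_pos: "kinf > 0"
    and pc: "piecewise_continuous q"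
    and lim_top: "(q \<longlongrightarrow> kinf\<^sup>2) at_top"
    and lim_bot: "(q \<longlongrightarrow> kinf\<^sup>2) at_bot"
    and int_top: "\<exists>a. (\<lambda>x. q x - kinf\<^sup>2) absolutely_integrable_on {a..}"
    and int_bot: "\<exists>a. (\<lambda>x. q x - kinf\<^sup>2) absolutely_integrable_on {..a}"
    and below: "\<And>x. q x \<le> kinf\<^sup>2"
    and chi_cont: "continuous_on UNIV (\<lambda>x. sqrt (kinf\<^sup>2 - q x))"
    and chi_pwC1: "\<And>a b. (\<lambda>x. sqrt (kinf\<^sup>2 - q x)) piecewise_C1_differentiable_on {a..b}"
    and hump_up: "mono_on {..x0} (\<lambda>x. sqrt (kinf\<^sup>2 - q x))"
    and hump_down: "antimono_on {x0..} (\<lambda>x. sqrt (kinf\<^sup>2 - q x))"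
    and sol: "is_solution q u"
    and asym_bot: "((\<lambda>x. u x - (exp (\<i> * of_real kinf * of_real x)
                               + r * exp (- (\<i> * of_real kinf * of_real x)))) \<longlongrightarrow> 0) at_bot"
    and asym_top: "((\<lambda>x. u x - \<tau> * exp (\<i> * of_real kinf * of_real x)) \<longlongrightarrow> 0) at_top"
  shows "(let I = (\<integral>\<^sup>+ x. ennreal (sqrt (kinf\<^sup>2 - q x)) \<partial>lborel) in
           (if I = \<infinity> then 0
            else (sech ((SUP x. sqrt (kinf\<^sup>2 - q x)) / kinf + enn2real I))\<^sup>2))
         \<le> (kinf / kinf) * (cmod \<tau>)\<^sup>2"
proof -
  define chi where "chi x = sqrt (kinf\<^sup>2 - q x)" for x
  define I where "I = (\<integral>\<^sup>+ x. ennreal (chi x) \<partial>lborel)"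
  have chipos: "chi x \<ge> 0" and q_chi: "q x = kinf\<^sup>2 - (chi x)\<^sup>2" for x
    using below[of x] by (simp_all add: chi_def)
  have chic: "continuous_on UNIV chi" using chi_cont by (simp add: chi_def[abs_def])
  obtain u' where du: "\<And>x. (u has_vector_derivative u' x) (at x)"
    and du': "\<And>x. (u' has_vector_derivative - (of_real (kinf\<^sup>2 - (chi x)\<^sup>2) * u x)) (at x)"
    using solution_derivatives[OF sol q_chi chic] by blast
  have chi_lim: "(chi \<longlongrightarrow> 0) at_top" "(chi \<longlongrightarrow> 0) at_bot"
    using tendsto_real_sqrt[OF tendsto_diff[OF tendsto_const[of "kinf\<^sup>2"] lim_top]]
      tendsto_real_sqrt[OF tendsto_diff[OF tendsto_const[of "kinf\<^sup>2"] lim_bot]]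
    by (simp_all add: chi_def[abs_def])
  have waves: "((\<lambda>x. u x - free_wave kinf 1 r x) \<longlongrightarrow> 0) at_bot"
    "((\<lambda>x. u x - free_wave kinf \<tau> 0 x) \<longlongrightarrow> 0) at_top"
    using asym_bot asym_top by (simp_all add: free_wave_def)
  have J: "integral {a..b} chi \<le> enn2real I" if "I \<noteq> \<infinity>" for a b
    using integral_le_nn_integral[OF continuous_on_subset[OF chic subset_UNIV] chipos] that
    by (simp add: I_def)
  have "(sech ((SUP x. chi x) / kinf + enn2real I))\<^sup>2 \<le> (cmod \<tau>)\<^sup>2" if "I \<noteq> \<infinity>"
    unfolding hump_maximum[OF hump_up[folded chi_def] hump_down[folded chi_def]]
    by (rule hump_transmission_bound[OF kinf_pos chic chipos chi_pwC1[folded chi_def]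
          hump_up[folded chi_def] hump_down[folded chi_def] chi_lim du du' waves J[OF that]])
  then show ?thesis using kinf_pos by (simp add: I_def chi_def[symmetric] Let_def)
qed

end
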